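(* Let $x\in\mathbb{R}^n$ and $\widehat{L}=L-P_{T_z}LP_{T_x^\perp}$. Then $\widehat{L}$ has full column rank, $\widehat{L}^\top\widehat{L}$ is diagonal and invertible, and $L^\top\widehat{L}=\widehat{L}^\top\widehat{L}$.
   Context: Let $n,N\in\mathbb{N}$, let $G_1,\dots,G_N\subseteq\{1,\dots,n\}$ be nonempty groups, possibly overlapping, with $\bigcup_iG_i=\{1,\dots,n\}$, and weights $w_i>0$. $x_G$ is the subvector of $x$ indexed by $G$ (increasing order). Let $p=\sum_i|G_i|$, partition $\{1,\dots,p\}$ into consecutive blocks $J_i=\{\sum_{j<i}|G_j|+1,\dots,\sum_{j\le i}|G_j|\}$, and define $L\in\mathbb{R}^{p\times n}$ by $(Lx)_{J_i}=w_ix_{G_i}$. For $x\in\mathbb{R}^n$: $\mathcal{I}_x=\{t:x_{G_t}\ne0\}$; $\mathcal{E}_x=\{1,\dots,n\}\setminus\bigcup_{t\notin\mathcal{I}_x}G_t$, $T_x=\{x'\in\mathbb{R}^n:\mathrm{supp}(x')\subseteq\mathcal{E}_x\}$; $\mathcal{E}_z=\bigcup_{t\in\mathcal{I}_x}J_t$, $T_z=\{z'\in\mathbb{R}^p:\mathrm{supp}(z')\subseteq\mathcal{E}_z\}$. $P_T$ is the orthogonal (coordinate) projection onto $T$ and $T^\perp$ its orthogonal complement. *)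

theory Defs
  imports "Jordan_Normal_Form.DL_Rank" "Jordan_Normal_Form.Matrix"
begin

text \<open>Groups are indexed by t < N (0-based); coordinates of x are 0..<n (0-based).\<close>

definition grp_off :: "(nat \<Rightarrow> nat set) \<Rightarrow> nat \<Rightarrow> nat" where
  "grp_off G t = (\<Sum>j<t. card (G j))"

definition grp_J :: "(nat \<Rightarrow> nat set) \<Rightarrow> nat \<Rightarrow> nat set" where
  "grp_J G t = {grp_off G t ..< grp_off G (Suc t)}"

text \<open>L: (L x)_{J_t} = w_t x_{G_t}, the subvector taken in increasing order.\<close>
definition Lmat :: "nat \<Rightarrow> nat \<Rightarrow> (nat \<Rightarrow> nat set) \<Rightarrow> (nat \<Rightarrow> real) \<Rightarrow> real mat" where
  "Lmat n N G w = mat (grp_off G N) n (\<lambda>(r, c).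
     \<Sum>t<N. if r \<in> grp_J G t \<and> c = sorted_list_of_set (G t) ! (r - grp_off G t) then w t else 0)"

definition act_grps :: "nat \<Rightarrow> (nat \<Rightarrow> nat set) \<Rightarrow> real vec \<Rightarrow> nat set" where
  "act_grps N G x = {t. t < N \<and> (\<exists>i\<in>G t. x $ i \<noteq> 0)}"

definition E_x :: "nat \<Rightarrow> nat \<Rightarrow> (nat \<Rightarrow> nat set) \<Rightarrow> real vec \<Rightarrow> nat set" where
  "E_x n N G x = {0..<n} - (\<Union>t\<in>{t. t < N \<and> t \<notin> act_grps N G x}. G t)"

definition E_z :: "nat \<Rightarrow> (nat \<Rightarrow> nat set) \<Rightarrow> real vec \<Rightarrow> nat set" where
  "E_z N G x = (\<Union>t\<in>act_grps N G x. grp_J G t)"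

definition coord_proj :: "nat \<Rightarrow> nat set \<Rightarrow> real mat" where
  "coord_proj m E = mat m m (\<lambda>(i, j). if i = j \<and> i \<in> E then 1 else 0)"

definition P_Tx :: "nat \<Rightarrow> nat \<Rightarrow> (nat \<Rightarrow> nat set) \<Rightarrow> real vec \<Rightarrow> real mat" where
  "P_Tx n N G x = coord_proj n (E_x n N G x)"

definition P_Tx_perp :: "nat \<Rightarrow> nat \<Rightarrow> (nat \<Rightarrow> nat set) \<Rightarrow> real vec \<Rightarrow> real mat" where
  "P_Tx_perp n N G x = 1\<^sub>m n - P_Tx n N G x"

definition P_Tz :: "nat \<Rightarrow> (nat \<Rightarrow> nat set) \<Rightarrow> real vec \<Rightarrow> real mat" where
  "P_Tz N G x = coord_proj (grp_off G N) (E_z N G x)"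

definition Lhat :: "nat \<Rightarrow> nat \<Rightarrow> (nat \<Rightarrow> nat set) \<Rightarrow> (nat \<Rightarrow> real) \<Rightarrow> real vec \<Rightarrow> real mat" where
  "Lhat n N G w x = Lmat n N G w - P_Tz N G x * Lmat n N G w * P_Tx_perp n N G x"

definition full_col_rank :: "real mat \<Rightarrow> bool" where
  "full_col_rank A = (vec_space.rank (dim_row A) A = dim_col A)"

end

theory Submission
  imports Defs
begin

text \<open>Every row of \<open>L\<close> has exactly one nonzero entry, and \<open>Lhat\<close> is \<open>L\<close> with the
  entries in rows of \<open>\<E>\<^sub>z\<close> and columns outside \<open>\<E>\<^sub>x\<close> set to zero. So \<open>Lhat\<close> still has at
  most one nonzero entry per row, which makes \<open>Lhat\<^sup>T Lhat\<close> diagonal and equal to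
  \<open>L\<^sup>T Lhat\<close>. Its diagonal holds the squared column norms of \<open>Lhat\<close>, and no column of \<open>Lhat\<close>
  vanishes: a coordinate in \<open>\<E>\<^sub>x\<close> keeps all its entries, and a coordinate outside \<open>\<E>\<^sub>x\<close>
  lies in an inactive group, whose rows are not in \<open>\<E>\<^sub>z\<close>. Hence the Gram matrix has nonzero
  determinant, so it is invertible and \<open>Lhat\<close> has trivial kernel, i.e. full column rank.\<close>

definition at_most_one_nonzero_per_row :: "'a::zero mat \<Rightarrow> bool" where
  "at_most_one_nonzero_per_row A \<longleftrightarrow>
     (\<forall>r<dim_row A. \<forall>c<dim_col A. \<forall>c'<dim_col A. c \<noteq> c' \<longrightarrow> A $$ (r, c) = 0 \<or> A $$ (r, c') = 0)"

definition mask_mat :: "(nat \<times> nat \<Rightarrow> bool) \<Rightarrow> 'a::zero mat \<Rightarrow> 'a mat" where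
  "mask_mat keep A = mat (dim_row A) (dim_col A) (\<lambda>rc. if keep rc then A $$ rc else 0)"

lemma dim_mask_mat [simp]:
  "dim_row (mask_mat keep A) = dim_row A" "dim_col (mask_mat keep A) = dim_col A"
  by (simp_all add: mask_mat_def)

lemma index_mask_mat [simp]:
  "r < dim_row A \<Longrightarrow> c < dim_col A \<Longrightarrow>
    mask_mat keep A $$ (r, c) = (if keep (r, c) then A $$ (r, c) else 0)"
  by (simp add: mask_mat_def)

lemma at_most_one_nonzero_per_row_mask_mat:
  "at_most_one_nonzero_per_row A \<Longrightarrow> at_most_one_nonzero_per_row (mask_mat keep A)"
  unfolding at_most_one_nonzero_per_row_def by auto

lemma index_gram_mat:
  fixes B :: "'a::comm_semiring_0 mat"
  assumes "i < dim_col B" "j < dim_col B"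
  shows "(B\<^sup>T * B) $$ (i, j) = (\<Sum>r<dim_row B. B $$ (r, i) * B $$ (r, j))"
  using assms by (simp add: scalar_prod_def atLeast0LessThan)

lemma diagonal_gram_mat:
  fixes B :: "'a::comm_semiring_0 mat"
  assumes "at_most_one_nonzero_per_row B"
  shows "diagonal_mat (B\<^sup>T * B)"
  unfolding diagonal_mat_def
proof (intro allI impI)
  fix i j assume "i < dim_row (B\<^sup>T * B)" "j < dim_col (B\<^sup>T * B)" "i \<noteq> j"
  with assms show "(B\<^sup>T * B) $$ (i, j) = 0"
    unfolding at_most_one_nonzero_per_row_def
    by (subst index_gram_mat) (auto intro!: sum.neutral, metis mult_zero_left mult_zero_right)
qed

lemma gram_mat_diag_pos:
  fixes B :: "'a::linordered_idom mat"
  assumes "r < dim_row B" "i < dim_col B" "B $$ (r, i) \<noteq> 0"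
  shows "(B\<^sup>T * B) $$ (i, i) > 0"
  unfolding index_gram_mat[OF assms(2,2)]
  by (rule sum_pos2[of _ r]) (use assms in \<open>auto simp: zero_less_mult_iff linorder_neq_iff\<close>)

text \<open>In row \<open>r\<close>, \<open>A $$ (r, i) * mask_mat keep A $$ (r, j)\<close> can only be nonzero for \<open>i = j\<close>
  at the unique nonzero entry of the row, where \<open>A\<close> and its mask agree.\<close>

lemma transpose_mult_mask_mat:
  fixes A :: "'a::comm_semiring_0 mat"
  assumes "at_most_one_nonzero_per_row A"
  shows "A\<^sup>T * mask_mat keep A = (mask_mat keep A)\<^sup>T * mask_mat keep A"
proof (rule eq_matI)
  fix i j assume "i < dim_row ((mask_mat keep A)\<^sup>T * mask_mat keep A)"
    "j < dim_col ((mask_mat keep A)\<^sup>T * mask_mat keep A)"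
  then have ij: "i < dim_col A" "j < dim_col A" by simp_all
  have "A $$ (r, i) * mask_mat keep A $$ (r, j) =
      mask_mat keep A $$ (r, i) * mask_mat keep A $$ (r, j)" if "r < dim_row A" for r
    using assms that ij unfolding at_most_one_nonzero_per_row_def
    by (cases "i = j") (auto, metis mult_zero_left mult_zero_right)
  then show "(A\<^sup>T * mask_mat keep A) $$ (i, j) = ((mask_mat keep A)\<^sup>T * mask_mat keep A) $$ (i, j)"
    using ij by (simp add: scalar_prod_def)
qed simp_all

lemma det_diagonal_mat_nonzero:
  fixes D :: "'a::idom mat"
  assumes "D \<in> carrier_mat n n" "diagonal_mat D" "\<And>i. i < n \<Longrightarrow> D $$ (i, i) \<noteq> 0"
  shows "det D \<noteq> 0"
proof -
  have "upper_triangular D"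
    using assms(1,2) unfolding diagonal_mat_def upper_triangular_def by auto
  then have "det D = prod_list (diag_mat D)"
    using assms(1) by (rule det_upper_triangular)
  moreover have "0 \<notin> set (diag_mat D)"
    using assms(1,3) by (auto simp: diag_mat_def)
  ultimately show ?thesis by (simp add: prod_list_zero_iff)
qed

lemma invertible_mat_of_det_nonzero:
  fixes A :: "'a::field mat"
  assumes "A \<in> carrier_mat n n" "det A \<noteq> 0"
  shows "invertible_mat A"
proof -
  obtain B where "B \<in> carrier_mat n n" "A * B = 1\<^sub>m n" "B * A = 1\<^sub>m n"
    using det_non_zero_imp_unit[OF assms, of "()"] by (auto simp: Units_def ring_mat_def)
  with assms(1) show ?thesis
    unfolding invertible_mat_def inverts_mat_def by auto
qed

lemma mult_unit_vec_eq_col: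
  fixes A :: "'a::comm_semiring_1 mat"
  assumes "A \<in> carrier_mat nr nc" "i < nc"
  shows "A *\<^sub>v unit_vec nc i = col A i"
  using assms by (intro eq_vecI) (auto simp: scalar_prod_right_unit)

lemma full_col_rank_of_trivial_kernel:
  fixes B :: "real mat"
  assumes B: "B \<in> carrier_mat p n"
    and ker: "\<And>v. v \<in> carrier_vec n \<Longrightarrow> B *\<^sub>v v = 0\<^sub>v p \<Longrightarrow> v = 0\<^sub>v n"
  shows "full_col_rank B"
proof -
  interpret vec_space "TYPE(real)" p .
  have "distinct (cols B)"
    unfolding cols_def distinct_map
  proof (intro conjI inj_onI)
    fix i j assume ij: "i \<in> set [0..<dim_col B]" "j \<in> set [0..<dim_col B]" "col B i = col B j"
    let ?v = "unit_vec n i - unit_vec n j :: real vec"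
    have "B *\<^sub>v ?v = col B i - col B j"
      using ij B by (simp add: mult_minus_distrib_mat_vec mult_unit_vec_eq_col)
    also have "\<dots> = 0\<^sub>v p"
      using ij(3) B by (simp add: carrier_vecI)
    finally have "?v = 0\<^sub>v n"
      by (rule ker[rotated]) simp
    then have "?v $ i = 0"
      using ij B by simp
    with ij B show "i = j"
      by (auto split: if_splits)
  qed simp
  moreover have "lin_indpt (set (cols B))"
    using lin_depE[OF B _ \<open>distinct (cols B)\<close>] ker by blast
  ultimately have "rank B = n"
    by (rule lin_indpt_full_rank[OF B])
  with B show ?thesis
    unfolding full_col_rank_def by simp
qed

lemma full_col_rank_of_det_gram_nonzero:
  fixes B :: "real mat"
  assumes B: "B \<in> carrier_mat p n" and det: "det (B\<^sup>T * B) \<noteq> 0"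
  shows "full_col_rank B"
proof (rule full_col_rank_of_trivial_kernel[OF B])
  fix v assume v: "v \<in> carrier_vec n" and "B *\<^sub>v v = 0\<^sub>v p"
  have "(B\<^sup>T * B) *\<^sub>v v = B\<^sup>T *\<^sub>v (B *\<^sub>v v)"
    by (rule assoc_mult_mat_vec) (use B v in auto)
  also have "\<dots> = 0\<^sub>v n"
    using \<open>B *\<^sub>v v = 0\<^sub>v p\<close> B by auto
  finally have "(B\<^sup>T * B) *\<^sub>v v = 0\<^sub>v n" .
  with v det show "v = 0\<^sub>v n"
    using det_0_iff_vec_prod_zero_field[of "B\<^sup>T * B" n] B by auto
qed

lemma grp_off_Suc: "grp_off G (Suc t) = grp_off G t + card (G t)"
  unfolding grp_off_def by simp

lemma grp_off_mono: "a \<le> b \<Longrightarrow> grp_off G a \<le> grp_off G b"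
  unfolding grp_off_def by (rule sum_mono2) auto

lemma grp_J_subset: "t < N \<Longrightarrow> grp_J G t \<subseteq> {..<grp_off G N}"
  using grp_off_mono[of "Suc t" N G] unfolding grp_J_def by auto

lemma grp_J_cover: "r < grp_off G N \<Longrightarrow> \<exists>t<N. r \<in> grp_J G t"
proof (induction N)
  case 0
  then show ?case by (simp add: grp_off_def)
next
  case (Suc N)
  then show ?case
    by (cases "r < grp_off G N") (auto simp: grp_J_def less_Suc_eq)
qed

lemma grp_J_disjoint:
  assumes "r \<in> grp_J G t" "r \<in> grp_J G t'"
  shows "t = t'"
proof (rule ccontr)
  assume "t \<noteq> t'"
  then have "Suc t \<le> t' \<or> Suc t' \<le> t" by linarith
  then show False
    using assms grp_off_mono[of "Suc t" t' G] grp_off_mono[of "Suc t'" t G]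
    unfolding grp_J_def by auto
qed

text \<open>The column of the nonzero entry of \<open>L\<close> in row \<open>r \<in> J\<^sub>t\<close>.\<close>

definition block_col :: "(nat \<Rightarrow> nat set) \<Rightarrow> nat \<Rightarrow> nat \<Rightarrow> nat" where
  "block_col G t r = sorted_list_of_set (G t) ! (r - grp_off G t)"

lemma block_col_surj:
  assumes "finite (G t)" "c \<in> G t"
  obtains r where "r \<in> grp_J G t" "block_col G t r = c"
proof -
  obtain k where "k < card (G t)" "sorted_list_of_set (G t) ! k = c"
    using assms by (metis in_set_conv_nth length_sorted_list_of_set set_sorted_list_of_set)
  then show thesis
    by (intro that[of "grp_off G t + k"]) (auto simp: grp_J_def grp_off_Suc block_col_def)
qed

lemma dim_Lmat [simp]: "dim_row (Lmat n N G w) = grp_off G N" "dim_col (Lmat n N G w) = n"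
  unfolding Lmat_def by simp_all

lemma Lmat_carrier: "Lmat n N G w \<in> carrier_mat (grp_off G N) n"
  by (simp add: carrier_matI)

lemma index_Lmat:
  assumes "t < N" "r \<in> grp_J G t" "c < n"
  shows "Lmat n N G w $$ (r, c) = (if c = block_col G t r then w t else 0)"
proof -
  have "r < grp_off G N"
    using assms(1,2) grp_J_subset by blast
  then have "Lmat n N G w $$ (r, c) =
      (\<Sum>t'<N. if r \<in> grp_J G t' \<and> c = block_col G t' r then w t' else 0)"
    using assms(3) by (simp add: Lmat_def block_col_def)
  also have "\<dots> = (\<Sum>t'\<in>{t}. if r \<in> grp_J G t' \<and> c = block_col G t' r then w t' else 0)"
    by (rule sum.mono_neutral_right) (use assms(1) grp_J_disjoint[OF assms(2)] in auto)
  finally show ?thesis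
    using assms(2) by simp
qed

lemma at_most_one_nonzero_per_row_Lmat: "at_most_one_nonzero_per_row (Lmat n N G w)"
  unfolding at_most_one_nonzero_per_row_def
proof (intro allI impI)
  fix r c c' assume "r < dim_row (Lmat n N G w)" "c < dim_col (Lmat n N G w)"
    "c' < dim_col (Lmat n N G w)" "c \<noteq> c'"
  moreover obtain t where "t < N" "r \<in> grp_J G t"
    using grp_J_cover[of r G N] \<open>r < dim_row (Lmat n N G w)\<close> by auto
  ultimately show "Lmat n N G w $$ (r, c) = 0 \<or> Lmat n N G w $$ (r, c') = 0"
    by (auto simp: index_Lmat)
qed

lemma index_coord_proj_mult:
  fixes A :: "real mat"
  assumes A: "A \<in> carrier_mat m k" and i: "i < m" and j: "j < k"
  shows "(coord_proj m E * A) $$ (i, j) = (if i \<in> E then A $$ (i, j) else 0)"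
proof -
  have "(coord_proj m E * A) $$ (i, j) =
      (\<Sum>l\<in>{0..<m}. (if i = l \<and> i \<in> E then 1 else 0) * A $$ (l, j))"
    using A i j by (simp add: scalar_prod_def coord_proj_def)
  also have "\<dots> = (\<Sum>l\<in>{i}. (if i = l \<and> i \<in> E then 1 else 0) * A $$ (l, j))"
    by (rule sum.mono_neutral_right) (use i in auto)
  finally show ?thesis by simp
qed

lemma index_mult_coord_proj:
  fixes A :: "real mat"
  assumes A: "A \<in> carrier_mat m k" and i: "i < m" and j: "j < k"
  shows "(A * coord_proj k E) $$ (i, j) = (if j \<in> E then A $$ (i, j) else 0)"
proof -
  have "(A * coord_proj k E) $$ (i, j) =
      (\<Sum>l\<in>{0..<k}. A $$ (i, l) * (if l = j \<and> l \<in> E then 1 else 0))"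
    using A i j by (simp add: scalar_prod_def coord_proj_def)
  also have "\<dots> = (\<Sum>l\<in>{j}. A $$ (i, l) * (if l = j \<and> l \<in> E then 1 else 0))"
    by (rule sum.mono_neutral_right) (use j in auto)
  finally show ?thesis by simp
qed

lemma P_Tx_perp_eq: "P_Tx_perp n N G x = coord_proj n ({0..<n} - E_x n N G x)"
  unfolding P_Tx_perp_def P_Tx_def coord_proj_def by (rule eq_matI) auto

lemma P_Tz_carrier: "P_Tz N G x \<in> carrier_mat (grp_off G N) (grp_off G N)"
  by (simp add: P_Tz_def coord_proj_def)

lemma P_Tx_perp_carrier: "P_Tx_perp n N G x \<in> carrier_mat n n"
  by (simp add: P_Tx_perp_eq coord_proj_def)

lemma Lhat_eq_mask_mat:
  "Lhat n N G w x = mask_mat (\<lambda>(r, c). r \<notin> E_z N G x \<or> c \<in> E_x n N G x) (Lmat n N G w)"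
proof -
  let ?L = "Lmat n N G w" and ?M = "P_Tz N G x * Lmat n N G w * P_Tx_perp n N G x"
  have PL: "P_Tz N G x * ?L \<in> carrier_mat (grp_off G N) n"
    using P_Tz_carrier Lmat_carrier by (rule mult_carrier_mat)
  have M: "?M \<in> carrier_mat (grp_off G N) n"
    using PL P_Tx_perp_carrier by (rule mult_carrier_mat)
  show ?thesis
  proof (rule eq_matI)
    fix r c assume "r < dim_row (mask_mat (\<lambda>(r, c). r \<notin> E_z N G x \<or> c \<in> E_x n N G x) ?L)"
      "c < dim_col (mask_mat (\<lambda>(r, c). r \<notin> E_z N G x \<or> c \<in> E_x n N G x) ?L)"
    then have rc: "r < grp_off G N" "c < n" by simp_all
    have M_rc:
      "?M $$ (r, c) = (if r \<in> E_z N G x \<and> c \<notin> E_x n N G x then ?L $$ (r, c) else 0)"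
      unfolding P_Tx_perp_eq index_mult_coord_proj[OF PL rc] unfolding P_Tz_def
        index_coord_proj_mult[OF Lmat_carrier rc]
      using rc by auto
    have "Lhat n N G w x $$ (r, c) = ?L $$ (r, c) - ?M $$ (r, c)"
      unfolding Lhat_def using M rc by (subst index_minus_mat) auto
    then show "Lhat n N G w x $$ (r, c) =
        mask_mat (\<lambda>(r, c). r \<notin> E_z N G x \<or> c \<in> E_x n N G x) ?L $$ (r, c)"
      unfolding M_rc using rc by simp
  qed (simp_all add: Lhat_def P_Tz_carrier[THEN carrier_matD(1)]
      P_Tx_perp_carrier[THEN carrier_matD(2)])
qed

text \<open>For \<open>c \<notin> \<E>\<^sub>x\<close> the group is an inactive one containing \<open>c\<close>: its rows are not in \<open>\<E>\<^sub>z\<close>.\<close>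

lemma kept_group_exists:
  assumes cover: "(\<Union>t<N. G t) = {0..<n}" and c: "c < n"
  obtains t where "t < N" "c \<in> G t"
    "\<And>r. r \<in> grp_J G t \<Longrightarrow> r \<notin> E_z N G x \<or> c \<in> E_x n N G x"
proof (cases "c \<in> E_x n N G x")
  case True
  obtain t where "t < N" "c \<in> G t"
    using c cover by (metis UN_iff atLeastLessThan_iff lessThan_iff zero_le)
  then show thesis
    by (rule that) (use True in simp)
next
  case False
  then obtain t where t: "t < N" "t \<notin> act_grps N G x" "c \<in> G t"
    using c unfolding E_x_def by auto
  show thesis
  proof (rule that[OF t(1,3)])
    fix r assume "r \<in> grp_J G t"
    then show "r \<notin> E_z N G x \<or> c \<in> E_x n N G x"
      using t(2) grp_J_disjoint unfolding E_z_def by blast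
  qed
qed

lemma Lhat_col_nonzero:
  assumes sub: "\<And>t. t < N \<Longrightarrow> G t \<subseteq> {0..<n}" and cover: "(\<Union>t<N. G t) = {0..<n}"
    and pos: "\<And>t. t < N \<Longrightarrow> w t > 0" and c: "c < n"
  shows "\<exists>r<grp_off G N. Lhat n N G w x $$ (r, c) \<noteq> 0"
proof -
  obtain t where t: "t < N" "c \<in> G t"
    and kept: "\<And>r. r \<in> grp_J G t \<Longrightarrow> r \<notin> E_z N G x \<or> c \<in> E_x n N G x"
    using kept_group_exists[OF cover c] by blast
  have "finite (G t)"
    by (rule finite_subset[OF sub[OF t(1)]]) simp
  then obtain r where r: "r \<in> grp_J G t" "block_col G t r = c"
    using t(2) by (rule block_col_surj)
  have "r < grp_off G N"
    using grp_J_subset[OF t(1)] r(1) by auto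
  moreover have "Lhat n N G w x $$ (r, c) = Lmat n N G w $$ (r, c)"
    using \<open>r < grp_off G N\<close> c kept[OF r(1)] by (simp add: Lhat_eq_mask_mat)
  moreover have "Lmat n N G w $$ (r, c) = w t"
    using index_Lmat[OF t(1) r(1) c] r(2) by simp
  ultimately show ?thesis
    using pos[OF t(1)] by auto
qed

theorem lemmaA4:
  fixes n N :: nat and G :: "nat \<Rightarrow> nat set" and w :: "nat \<Rightarrow> real" and x :: "real vec"
  assumes "\<And>t. t < N \<Longrightarrow> G t \<noteq> {}"
      and "\<And>t. t < N \<Longrightarrow> G t \<subseteq> {0..<n}"
      and "(\<Union>t<N. G t) = {0..<n}"
      and "\<And>t. t < N \<Longrightarrow> w t > 0"
      and "x \<in> carrier_vec n"
  shows "full_col_rank (Lhat n N G w x)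
       \<and> diagonal_mat ((Lhat n N G w x)\<^sup>T * Lhat n N G w x)
       \<and> invertible_mat ((Lhat n N G w x)\<^sup>T * Lhat n N G w x)
       \<and> (Lmat n N G w)\<^sup>T * Lhat n N G w x = (Lhat n N G w x)\<^sup>T * Lhat n N G w x"
proof -
  let ?L = "Lmat n N G w" and ?B = "Lhat n N G w x"
  have B: "?B \<in> carrier_mat (grp_off G N) n"
    unfolding Lhat_eq_mask_mat by (simp add: carrier_matI)
  then have gram: "?B\<^sup>T * ?B \<in> carrier_mat n n"
    by auto
  have diag: "diagonal_mat (?B\<^sup>T * ?B)"
    unfolding Lhat_eq_mask_mat
    by (intro diagonal_gram_mat at_most_one_nonzero_per_row_mask_mat at_most_one_nonzero_per_row_Lmat)
  have "(?B\<^sup>T * ?B) $$ (c, c) \<noteq> 0" if c: "c < n" for c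
  proof -
    obtain r where "r < grp_off G N" "?B $$ (r, c) \<noteq> 0"
      using Lhat_col_nonzero[of N G n w c x, OF assms(2-4) c] by blast
    then show ?thesis
      using gram_mat_diag_pos[of r ?B c] B c by simp
  qed
  with gram diag have det: "det (?B\<^sup>T * ?B) \<noteq> 0"
    by (rule det_diagonal_mat_nonzero)
  have "?L\<^sup>T * ?B = ?B\<^sup>T * ?B"
    unfolding Lhat_eq_mask_mat by (intro transpose_mult_mask_mat at_most_one_nonzero_per_row_Lmat)
  then show ?thesis
    using full_col_rank_of_det_gram_nonzero[OF B det] diag
      invertible_mat_of_det_nonzero[OF gram det] by simp
qed

end
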